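(* Let $C$ be a binary linear self-dual code of length $n$ with exact weight enumerator $W$ and derivatives $W_{<t>}$. Then for every integer $t$ with $0\le t\le n$, $W_{<t>}$ lies in the eigenspace of the eigenvalue $1$ of $K^{[n-t]}$, i.e. $W_{<t>}K^{[n-t]}=W_{<t>}$ (with $W_{<t>}$ regarded as a row vector and $K^{[0]}=[1]$).
   Context: $F=\{0,1\}$ is the binary field. A binary linear self-dual code $C$ of length $n$ is a linear subspace of $F^n$ of dimension $n/2$ equal to its orthogonal complement under the standard dot product. The exact weight enumerator of $C$ is the row vector $W\in\mathbb{Q}^{2^n}$ whose entries are labeled by the vectors of $F^n$ in lexicographic order, with $W[v]=1$ if $v\in C$ and $W[v]=0$ otherwise. Let $\rho=\sqrt2-1$. For $0\le t\le n$, the $t$-th derivative of $W$ is the row vector $W_{<t>}$ of length $2^{n-t}$ with entries labeled (in lexicographic order) by $v\in F^{n-t}$ given by $W_{<t>}[v]=\sum_{u\in F^t}\rho^{wt(u)}W[uv]$, where $wt(u)$ is the Hamming weight of $u$ and $uv$ is the concatenation of $u$ and $v$. $K=\frac{1}{\sqrt2}\begin{bmatrix}1&1\\1&-1\end{bmatrix}$, $K^{[1]}=K$, $K^{[m]}=K^{[m-1]}\otimes K$ (Kronecker product). *)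

theory Defs
  imports Complex_Main
begin

text \<open>Vectors of F^n are boolean lists of length n (False = 0, True = 1).
  Real row vectors indexed by F^m are functions bool list => real (only
  arguments of length m matter); matrices indexed by F^m x F^m are functions
  bool list => bool list => real. Lexicographic indexing corresponds to
  reading a list as a binary number, first entry most significant.\<close>

definition vecs :: "nat \<Rightarrow> bool list set" where
  "vecs m = {u. length u = m}"

definition vadd :: "bool list \<Rightarrow> bool list \<Rightarrow> bool list" where
  "vadd u v = map2 (\<noteq>) u v"

definition wt :: "bool list \<Rightarrow> nat" where
  "wt u = length (filter id u)"

definition dotF :: "bool list \<Rightarrow> bool list \<Rightarrow> bool" where
  "dotF u v = odd (length (filter id (map2 (\<and>) u v)))"

definition linear_code :: "nat \<Rightarrow> bool list set \<Rightarrow> bool" where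
  "linear_code n C \<longleftrightarrow> C \<subseteq> vecs n \<and> replicate n False \<in> C \<and>
     (\<forall>u\<in>C. \<forall>v\<in>C. vadd u v \<in> C)"

definition dual_code :: "nat \<Rightarrow> bool list set \<Rightarrow> bool list set" where
  "dual_code n C = {v \<in> vecs n. \<forall>c\<in>C. \<not> dotF c v}"

definition self_dual_code :: "nat \<Rightarrow> bool list set \<Rightarrow> bool" where
  "self_dual_code n C \<longleftrightarrow> linear_code n C \<and> even n \<and> card C = 2 ^ (n div 2)
     \<and> C = dual_code n C"

definition exact_we :: "bool list set \<Rightarrow> bool list \<Rightarrow> real" where
  "exact_we C v = (if v \<in> C then 1 else 0)"

definition rho :: real where "rho = sqrt 2 - 1"

definition deriv_we :: "(bool list \<Rightarrow> real) \<Rightarrow> nat \<Rightarrow> bool list \<Rightarrow> real" where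
  "deriv_we W t v = (\<Sum>u\<in>vecs t. rho ^ wt u * W (u @ v))"

definition Kmat :: "bool \<Rightarrow> bool \<Rightarrow> real" where
  "Kmat a b = (if a \<and> b then -1 else 1) / sqrt 2"

text \<open>K^[m]; K^[0] = [1], K^[m+1] = K^[m] \<otimes> K (Kronecker product: the last
  coordinate indexes the K factor).\<close>
fun Kpow :: "nat \<Rightarrow> bool list \<Rightarrow> bool list \<Rightarrow> real" where
  "Kpow 0 u v = 1"
| "Kpow (Suc m) u v = Kpow m (butlast u) (butlast v) * Kmat (last u) (last v)"

definition vec_mat :: "nat \<Rightarrow> (bool list \<Rightarrow> real) \<Rightarrow> (bool list \<Rightarrow> bool list \<Rightarrow> real)
    \<Rightarrow> bool list \<Rightarrow> real" where
  "vec_mat m x A v = (\<Sum>u\<in>vecs m. x u * A u v)"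

end

theory Submission
  imports Defs
begin

(* Since K fixes the vector (1, rho), the vector (rho^wt(u))_u is fixed by K^[t]; as
   K^[t+m] = K^[t] (x) K^[m], taking the t-th derivative turns W K^[t+m] into W_<t> K^[m], for
   every W. It remains that W K^[n] = W for a self-dual code C: the entries of K^[n] are
   (-1)^(x.z) / 2^(n/2), and the character sum of z over C is |C| = 2^(n/2) if z lies in the
   dual of C, which is C, and 0 otherwise. *)

lemma mem_vecs_iff [simp]: "u \<in> vecs m \<longleftrightarrow> length u = m"
  by (simp add: vecs_def)

lemma vecs_0: "vecs 0 = {[]}"
  by (auto simp: vecs_def)

lemma vecs_Suc: "vecs (Suc m) = Cons False ` vecs m \<union> Cons True ` vecs m"
  by (auto simp: vecs_def length_Suc_conv)

lemma finite_vecs [simp]: "finite (vecs m)"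
  by (induction m) (simp_all add: vecs_0 vecs_Suc)

lemma sum_vecs_Suc:
  "(\<Sum>z\<in>vecs (Suc m). f z)
     = (\<Sum>u\<in>vecs m. f (False # u)) + (\<Sum>u\<in>vecs m. f (True # u))"
  unfolding vecs_Suc by (subst sum.union_disjoint) (auto simp: sum.reindex)

lemma sum_vecs_add:
  "(\<Sum>z\<in>vecs (a + b). f z) = (\<Sum>x\<in>vecs a. \<Sum>y\<in>vecs b. f (x @ y))"
  by (induction a arbitrary: f) (simp_all add: vecs_0 sum_vecs_Suc sum.distrib)

lemma Kpow_Cons:
  "length u = m \<Longrightarrow> length v = m \<Longrightarrow> Kpow (Suc m) (a # u) (b # v) = Kmat a b * Kpow m u v"
proof (induction m arbitrary: u v)
  case (Suc m)
  then obtain u' v' c d where "u = u' @ [c]" "v = v' @ [d]" "length u' = m" "length v' = m"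
    by (metis length_Suc_conv_rev)
  with Suc.IH show ?case by simp
qed simp

declare Kpow.simps(2) [simp del]

lemma Kpow_append:
  assumes "length x = a" "length u = a" "length y = b" "length v = b"
  shows "Kpow (a + b) (x @ y) (u @ v) = Kpow a x u * Kpow b y v"
  using assms by (induction x arbitrary: a u) (auto simp: Kpow_Cons length_Suc_conv)

lemma Kmat_fixes_rho:
  "Kmat a False + Kmat a True * rho = rho ^ (if a then 1 else 0)"
proof -
  have "sqrt 2 * sqrt 2 = (2::real)" by simp
  then show ?thesis by (cases a) (auto simp: Kmat_def rho_def field_simps)
qed

lemma wt_Cons [simp]: "wt (b # u) = (if b then 1 else 0) + wt u"
  by (simp add: wt_def)

lemma Kpow_fixes_rho_pow_wt:
  "u \<in> vecs t \<Longrightarrow> (\<Sum>x\<in>vecs t. Kpow t u x * rho ^ wt x) = rho ^ wt u"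
proof (induction t arbitrary: u)
  case 0
  then show ?case by (simp add: vecs_0 wt_def)
next
  case (Suc t)
  then obtain a u' where u: "u = a # u'" "u' \<in> vecs t"
    by (auto simp: vecs_def length_Suc_conv)
  have "(\<Sum>x\<in>vecs (Suc t). Kpow (Suc t) u x * rho ^ wt x)
      = (\<Sum>x\<in>vecs t. (Kmat a False + Kmat a True * rho) * (Kpow t u' x * rho ^ wt x))"
    unfolding sum_vecs_Suc u(1) sum.distrib[symmetric]
    by (intro sum.cong) (use u(2) in \<open>simp_all add: Kpow_Cons algebra_simps\<close>)
  then show ?case
    using Suc.IH[OF u(2)] by (simp add: Kmat_fixes_rho u(1) sum_distrib_left[symmetric])
qed

lemma deriv_we_vec_mat_Kpow:
  assumes "w \<in> vecs m"
  shows "deriv_we (vec_mat (t + m) W (Kpow (t + m))) t w = vec_mat m (deriv_we W t) (Kpow m) w"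
proof -
  have "deriv_we (vec_mat (t + m) W (Kpow (t + m))) t w
      = (\<Sum>x\<in>vecs t. \<Sum>u\<in>vecs t. \<Sum>v\<in>vecs m.
          rho ^ wt x * (W (u @ v) * (Kpow t u x * Kpow m v w)))"
    unfolding deriv_we_def vec_mat_def sum_vecs_add sum_distrib_left
    by (intro sum.cong) (use assms in \<open>simp_all add: Kpow_append\<close>)
  also have "\<dots> = (\<Sum>u\<in>vecs t. \<Sum>v\<in>vecs m.
      W (u @ v) * Kpow m v w * (\<Sum>x\<in>vecs t. Kpow t u x * rho ^ wt x))"
    unfolding sum_distrib_left
    by (subst sum.swap, rule sum.cong, simp, subst sum.swap) (simp add: ac_simps)
  also have "\<dots> = (\<Sum>u\<in>vecs t. \<Sum>v\<in>vecs m. W (u @ v) * Kpow m v w * rho ^ wt u)"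
    by (simp add: Kpow_fixes_rho_pow_wt)
  also have "\<dots> = vec_mat m (deriv_we W t) (Kpow m) w"
    unfolding vec_mat_def deriv_we_def sum_distrib_right
    by (subst sum.swap) (simp add: ac_simps)
  finally show ?thesis .
qed

lemma deriv_we_Kpow_fixed:
  assumes fixed: "\<And>z. z \<in> vecs (t + m) \<Longrightarrow> vec_mat (t + m) W (Kpow (t + m)) z = W z"
    and w: "w \<in> vecs m"
  shows "vec_mat m (deriv_we W t) (Kpow m) w = deriv_we W t w"
proof -
  have "deriv_we W t w = deriv_we (vec_mat (t + m) W (Kpow (t + m))) t w"
    unfolding deriv_we_def by (rule sum.cong) (use w fixed in simp_all)
  then show ?thesis
    using deriv_we_vec_mat_Kpow[OF w] by simp
qed

definition chi :: "bool list \<Rightarrow> bool list \<Rightarrow> real" where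
  "chi u v = (if dotF u v then -1 else 1)"

lemma chi_Nil [simp]: "chi [] [] = 1"
  by (simp add: chi_def dotF_def)

lemma chi_Cons [simp]: "chi (a # u) (b # v) = (if a \<and> b then -1 else 1) * chi u v"
  by (simp add: chi_def dotF_def)

lemma Kpow_eq_chi: "length u = m \<Longrightarrow> length v = m \<Longrightarrow> Kpow m u v = chi u v / sqrt 2 ^ m"
  by (induction m arbitrary: u v)
    (auto simp: Kpow_Cons Kmat_def length_Suc_conv)

lemma chi_vadd:
  "length x = length c \<Longrightarrow> length c = length z \<Longrightarrow> chi (vadd x c) z = chi x z * chi c z"
  by (induction x c z rule: list_induct3) (auto simp: vadd_def)

lemma vadd_vadd_cancel: "length x = length c \<Longrightarrow> vadd (vadd x c) c = x"
  by (induction x c rule: list_induct2) (auto simp: vadd_def)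

lemma sum_chi_linear_code_outside_dual:
  assumes C: "linear_code n C" and z: "z \<in> vecs n" "z \<notin> dual_code n C"
  shows "(\<Sum>x\<in>C. chi x z) = 0"
proof -
  from z obtain c where c: "c \<in> C" "dotF c z"
    by (auto simp: dual_code_def)
  have len: "x \<in> C \<Longrightarrow> length x = n" for x
    using C by (auto simp: linear_code_def)
  have closed: "x \<in> C \<Longrightarrow> vadd x c \<in> C" for x
    using C c by (simp add: linear_code_def)
  \<comment> \<open>translation by c permutes C and flips every sign\<close>
  have "(\<Sum>x\<in>C. chi x z) = (\<Sum>x\<in>C. chi (vadd x c) z)"
    by (rule sum.reindex_bij_witness[where i="\<lambda>x. vadd x c" and j="\<lambda>x. vadd x c"])
      (use c closed len in \<open>auto simp: vadd_vadd_cancel\<close>)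
  also have "\<dots> = (\<Sum>x\<in>C. - chi x z)"
  proof (rule sum.cong)
    fix x assume "x \<in> C"
    then show "chi (vadd x c) z = - chi x z"
      using chi_vadd[of x c z] c z len by (simp add: chi_def)
  qed simp
  finally show ?thesis by (simp add: sum_negf)
qed

lemma self_dual_code_Kpow_fixed:
  assumes C: "self_dual_code n C" and z: "z \<in> vecs n"
  shows "vec_mat n (exact_we C) (Kpow n) z = exact_we C z"
proof -
  have lin: "linear_code n C" and dual: "dual_code n C = C"
    and card: "card C = sqrt 2 ^ n"
    using C by (auto simp: self_dual_code_def power_mult simp flip: power2_eq_square)
  have "C \<subseteq> vecs n"
    using lin by (simp add: linear_code_def)
  have "vec_mat n (exact_we C) (Kpow n) z = (\<Sum>x\<in>C. Kpow n x z)"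
    unfolding vec_mat_def
    by (rule sum.mono_neutral_cong_right)
      (use \<open>C \<subseteq> vecs n\<close> in \<open>auto simp: exact_we_def\<close>)
  also have "\<dots> = (\<Sum>x\<in>C. chi x z) / sqrt 2 ^ n"
    unfolding sum_divide_distrib
    by (rule sum.cong) (use \<open>C \<subseteq> vecs n\<close> z in \<open>auto simp: Kpow_eq_chi\<close>)
  also have "\<dots> = exact_we C z"
  proof (cases "z \<in> C")
    case True
    then have "\<forall>x\<in>C. chi x z = 1"
      using dual by (auto simp: dual_code_def chi_def)
    then show ?thesis using True card by (simp add: exact_we_def)
  next
    case False
    then show ?thesis
      using sum_chi_linear_code_outside_dual[OF lin z] dual by (simp add: exact_we_def)
  qed
  finally show ?thesis .
qed

theorem theorem6:
  fixes n :: nat and C :: "bool list set"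
  assumes "self_dual_code n C"
  shows "\<forall>t \<le> n. \<forall>v \<in> vecs (n - t).
           vec_mat (n - t) (deriv_we (exact_we C) t) (Kpow (n - t)) v
             = deriv_we (exact_we C) t v"
proof (intro allI impI ballI)
  fix t v assume "t \<le> n" and v: "v \<in> vecs (n - t)"
  then have "n = t + (n - t)" by simp
  with self_dual_code_Kpow_fixed[OF assms]
  show "vec_mat (n - t) (deriv_we (exact_we C) t) (Kpow (n - t)) v = deriv_we (exact_we C) t v"
    using deriv_we_Kpow_fixed[OF _ v] by metis
qed

end
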